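(* For each positive integer $k$, the graph $K_{k+1,\lfloor (k+1)^2/4\rfloor}$ admits a balanced $k$-page embedding.
   Context: A book with $k$ pages consists of a line (the spine) and $k$ half-planes (the pages) whose common boundary is the spine. A $k$-page embedding places all vertices on the spine and each edge inside a single page with no crossings. In $K_{k+1,s}$ call the $k+1$ vertices of degree $s$ black and the $s$ vertices of degree $k+1$ white. The load of a white vertex $v$ in a page is the number of edges incident with $v$ drawn in that page. A $k$-page embedding of $K_{k+1,s}$ is balanced if every white vertex has load exactly $1$ in $k-1$ of the pages (hence load $2$ in the remaining page). *)

theory Defs
  imports Main
begin

text \<open>Placing the vertices on the spine
is an injective map pos : V -> nat (the order along the spine); each edge goes to one of the
pages 0..k-1. Two edges drawn in the same page cross iff their endpoints interleave strictly
along the spine.\<close>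

definition crossing :: "nat \<Rightarrow> nat \<Rightarrow> nat \<Rightarrow> nat \<Rightarrow> bool" where
  "crossing a b c d \<longleftrightarrow>
     (min a b < min c d \<and> min c d < max a b \<and> max a b < max c d) \<or>
     (min c d < min a b \<and> min a b < max c d \<and> max c d < max a b)"

definition book_embedding ::
  "nat \<Rightarrow> 'v set \<Rightarrow> 'v set set \<Rightarrow> ('v \<Rightarrow> nat) \<Rightarrow> ('v set \<Rightarrow> nat) \<Rightarrow> bool" where
  "book_embedding k V E pos page \<longleftrightarrow>
     inj_on pos V \<and>
     (\<forall>e\<in>E. page e < k) \<and>
     (\<forall>e\<in>E. \<forall>f\<in>E. \<forall>u v x y. e = {u, v} \<and> f = {x, y} \<and> page e = page f
         \<longrightarrow> \<not> crossing (pos u) (pos v) (pos x) (pos y))"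

text \<open>The complete bipartite graph K_{m,s}: black vertices Inl i (i < m),
white vertices Inr j (j < s).\<close>

definition KV :: "nat \<Rightarrow> nat \<Rightarrow> (nat + nat) set" where
  "KV m s = Inl ` {..<m} \<union> Inr ` {..<s}"

definition KE :: "nat \<Rightarrow> nat \<Rightarrow> (nat + nat) set set" where
  "KE m s = {{Inl i, Inr j} | i j. i < m \<and> j < s}"

definition load :: "nat \<Rightarrow> ((nat + nat) set \<Rightarrow> nat) \<Rightarrow> nat \<Rightarrow> nat \<Rightarrow> nat" where
  "load m page j p = card {i. i < m \<and> page {Inl i, Inr j} = p}"

definition balanced_embedding ::
  "nat \<Rightarrow> nat \<Rightarrow> ((nat + nat) \<Rightarrow> nat) \<Rightarrow> ((nat + nat) set \<Rightarrow> nat) \<Rightarrow> bool" where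
  "balanced_embedding k s pos page \<longleftrightarrow>
     book_embedding k (KV (k+1) s) (KE (k+1) s) pos page \<and>
     (\<forall>j<s. card {p. p < k \<and> load (k+1) page j p = 1} = k - 1)"

end

theory Submission
  imports Defs
begin

text \<open>Write \<open>k + 1 = a + b\<close> with \<open>ab = \<lfloor>(k+1)\<^sup>2/4\<rfloor>\<close> and index the white vertices
by the cells \<open>(r, t)\<close> of an \<open>a \<times> b\<close> grid. Along the spine come first the black vertices
\<open>0, \<dots>, b\<close>, then for each row \<open>r\<close> the white vertices \<open>(r, 0), \<dots>, (r, b - 1)\<close> followed by the
black vertex \<open>b + 1 + r\<close>; so positions are two-digit numerals in base \<open>b + 1\<close>, the black
vertices beyond \<open>b\<close> taking the digit \<open>b\<close>. At the white vertex \<open>(r, t)\<close> the black vertices are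
permuted by \<open>slot\<close> (black vertex \<open>i \<le> b\<close> gets slot \<open>r + i\<close>), and the edge goes to its slot
with slots \<open>r + t\<close> and \<open>r + t + 1\<close> merged. Hence every page has load 1 at \<open>(r, t)\<close> except
page \<open>r + t\<close>, which has load 2, and a case analysis on the black endpoints shows that edges
in a common page do not cross.\<close>

lemma crossing_commute: "crossing a b c d \<longleftrightarrow> crossing c d a b"
  unfolding crossing_def by auto

lemma crossing_swap_first: "crossing a b c d \<longleftrightarrow> crossing b a c d"
  unfolding crossing_def by (simp add: min.commute max.commute)

lemma crossing_swap_second: "crossing a b c d \<longleftrightarrow> crossing a b d c"
  unfolding crossing_def by (simp add: min.commute max.commute)

lemma not_crossing_common_endpoint: "\<not> crossing x y x z"
  unfolding crossing_def min_def max_def by auto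

lemma crossing_from_leftmost:
  "l < w \<Longrightarrow> l < x \<Longrightarrow> l < y \<Longrightarrow>
    crossing l w x y \<longleftrightarrow> x < w \<and> w < y \<or> y < w \<and> w < x"
  unfolding crossing_def min_def max_def by auto

lemma crossing_left_endpoints:
  "l < w \<Longrightarrow> l < w' \<Longrightarrow> l' < w \<Longrightarrow> l' < w' \<Longrightarrow>
    crossing l w l' w' \<longleftrightarrow> l < l' \<and> w < w' \<or> l' < l \<and> w' < w"
  unfolding crossing_def min_def max_def by auto

lemma not_crossing_separated: "max a b < min c d \<Longrightarrow> \<not> crossing a b c d"
  unfolding crossing_def by auto

lemma mixed_radix_less_iff:
  fixes m :: nat
  assumes "t < m" "t' < m"
  shows "m * r + t < m * r' + t' \<longleftrightarrow> r < r' \<or> r = r' \<and> t < t'"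
proof -
  have below: "m * q + s < m * q' + s'" if "q < q'" "s < m" for q q' s s'
  proof -
    have "m * q + s < m * Suc q" using that by simp
    also have "\<dots> \<le> m * q'" using that by (intro mult_le_mono2) simp
    finally show ?thesis by simp
  qed
  consider "r < r'" | "r = r'" | "r' < r" by linarith
  then show ?thesis
  proof cases
    case 1
    then show ?thesis using below[of r r' t t'] assms by simp
  next
    case 2
    then show ?thesis by simp
  next
    case 3
    then show ?thesis using below[of r' r t' t] assms by simp
  qed
qed

definition white_pos :: "nat \<Rightarrow> nat \<Rightarrow> nat \<Rightarrow> nat" where
  "white_pos b r t = (b + 1) * (r + 1) + t"

definition black_pos :: "nat \<Rightarrow> nat \<Rightarrow> nat" where
  "black_pos b i = (if i \<le> b then i else white_pos b (i - b - 1) b)"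

lemma white_pos_less_iff:
  assumes "t \<le> b" "t' \<le> b"
  shows "white_pos b r t < white_pos b r' t' \<longleftrightarrow> r < r' \<or> r = r' \<and> t < t'"
  unfolding white_pos_def by (subst mixed_radix_less_iff) (use assms in auto)

lemma white_pos_eq_iff:
  assumes "t \<le> b" "t' \<le> b"
  shows "white_pos b r t = white_pos b r' t' \<longleftrightarrow> r = r' \<and> t = t'"
  using white_pos_less_iff[OF assms, of r r'] white_pos_less_iff[OF assms(2,1), of r' r]
  by (metis less_irrefl linorder_neqE_nat)

lemma less_white_pos: "i \<le> b \<Longrightarrow> i < white_pos b r t"
  unfolding white_pos_def by simp

definition slot :: "nat \<Rightarrow> nat \<Rightarrow> nat \<Rightarrow> nat" where
  "slot b r i = (if i \<le> b then r + i else if i \<le> b + r then i - b - 1 else i)"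

definition merge_at :: "nat \<Rightarrow> nat \<Rightarrow> nat" where
  "merge_at c s = (if s \<le> c then s else s - 1)"

definition edge_page :: "nat \<Rightarrow> nat \<Rightarrow> nat \<Rightarrow> nat \<Rightarrow> nat" where
  "edge_page b i r t = merge_at (r + t) (slot b r i)"

lemma edge_page_noncrossing_left_left:
  assumes "i \<le> b" "i' \<le> b" "t < b" "t' < b" "edge_page b i r t = edge_page b i' r' t'"
  shows "\<not> crossing (black_pos b i) (white_pos b r t) (black_pos b i') (white_pos b r' t')"
proof -
  have "crossing i (white_pos b r t) i' (white_pos b r' t') \<longleftrightarrow>
      i < i' \<and> white_pos b r t < white_pos b r' t' \<or> i' < i \<and> white_pos b r' t' < white_pos b r t"
    using assms(1,2) by (intro crossing_left_endpoints less_white_pos)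
  then show ?thesis
    using assms unfolding black_pos_def edge_page_def slot_def merge_at_def
    by (auto simp: white_pos_less_iff split: if_splits)
qed

lemma edge_page_noncrossing_left_right:
  assumes "i \<le> b" "b < i'" "t < b" "t' < b" "edge_page b i r t = edge_page b i' r' t'"
  shows "\<not> crossing (black_pos b i) (white_pos b r t) (black_pos b i') (white_pos b r' t')"
proof -
  have "crossing i (white_pos b r t) (white_pos b (i' - b - 1) b) (white_pos b r' t') \<longleftrightarrow>
      white_pos b (i' - b - 1) b < white_pos b r t \<and> white_pos b r t < white_pos b r' t' \<or>
      white_pos b r' t' < white_pos b r t \<and> white_pos b r t < white_pos b (i' - b - 1) b"
    using assms(1) by (intro crossing_from_leftmost less_white_pos)
  then show ?thesis
    using assms unfolding black_pos_def edge_page_def slot_def merge_at_def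
    by (auto simp: white_pos_less_iff split: if_splits)
qed

lemma edge_page_noncrossing_right_right:
  assumes "b < i" "b < i'" "t < b" "t' < b" "edge_page b i r t = edge_page b i' r' t'"
  shows "\<not> crossing (black_pos b i) (white_pos b r t) (black_pos b i') (white_pos b r' t')"
proof -
  have separated: "\<not> crossing (black_pos b j) (white_pos b q s) (black_pos b j') (white_pos b q' s')"
    if "b < j'" "j' = j - b" "j \<le> b + q" "b + q' < j'" "s < b" "s' < b" for j j' q q' s s'
  proof -
    have "max (black_pos b j') (white_pos b q' s') < min (black_pos b j) (white_pos b q s)"
      using that unfolding black_pos_def by (auto simp: white_pos_less_iff)
    then show ?thesis by (subst crossing_commute) (rule not_crossing_separated)
  qed
  consider "i = i'" | "b + r' < i'" "i' = i - b" "i \<le> b + r" | "b + r < i" "i = i' - b" "i' \<le> b + r'"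
    using assms unfolding edge_page_def slot_def merge_at_def by (auto split: if_splits)
  then show ?thesis
  proof cases
    case 1
    then show ?thesis by (simp add: not_crossing_common_endpoint)
  next
    case 2
    then show ?thesis using separated assms by blast
  next
    case 3
    then show ?thesis using separated[of i i' r' r t' t] assms by (simp add: crossing_commute)
  qed
qed

lemma edge_page_noncrossing:
  assumes "t < b" "t' < b" "edge_page b i r t = edge_page b i' r' t'"
  shows "\<not> crossing (black_pos b i) (white_pos b r t) (black_pos b i') (white_pos b r' t')"
proof (cases "i \<le> b"; cases "i' \<le> b")
  assume "i \<le> b" "i' \<le> b"
  then show ?thesis using edge_page_noncrossing_left_left assms by blast
next
  assume "i \<le> b" "\<not> i' \<le> b"
  then show ?thesis using edge_page_noncrossing_left_right assms by simp
next
  assume "\<not> i \<le> b" "i' \<le> b"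
  then show ?thesis
    using edge_page_noncrossing_left_right[of i' b i t' t r' r] assms by (simp add: crossing_commute)
next
  assume "\<not> i \<le> b" "\<not> i' \<le> b"
  then show ?thesis using edge_page_noncrossing_right_right assms by simp
qed

lemma edge_page_less:
  assumes "i < a + b" "r < a" "t < b"
  shows "edge_page b i r t < a + b - 1"
  using assms unfolding edge_page_def slot_def merge_at_def by auto

lemma bij_betw_slot:
  assumes "r < a"
  shows "bij_betw (slot b r) {..<a + b} {..<a + b}"
proof -
  have "inj_on (slot b r) {..<a + b}"
    by (rule inj_onI) (auto simp: slot_def split: if_splits)
  moreover have "slot b r ` {..<a + b} \<subseteq> {..<a + b}"
    using assms by (auto simp: slot_def)
  ultimately show ?thesis
    by (simp add: bij_betw_def endo_inj_surj)
qed

lemma card_merge_at_preimage: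
  assumes "c + 1 < n" "p < n - 1"
  shows "card {s. s < n \<and> merge_at c s = p} = (if p = c then 2 else 1)"
proof -
  consider "p < c" | "p = c" | "c < p" by linarith
  then show ?thesis
  proof cases
    case 1
    then have "{s. s < n \<and> merge_at c s = p} = {p}"
      using assms by (auto simp: merge_at_def)
    then show ?thesis using 1 by simp
  next
    case 2
    then have "{s. s < n \<and> merge_at c s = p} = {c, c + 1}"
      using assms by (auto simp: merge_at_def)
    then show ?thesis using 2 by simp
  next
    case 3
    then have "{s. s < n \<and> merge_at c s = p} = {p + 1}"
      using assms by (auto simp: merge_at_def)
    then show ?thesis using 3 by simp
  qed
qed

lemma card_edge_page_preimage:
  assumes "r < a" "t < b" "p < a + b - 1"
  shows "card {i. i < a + b \<and> edge_page b i r t = p} = (if p = r + t then 2 else 1)"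
proof -
  have "bij_betw (slot b r) {i \<in> {..<a + b}. edge_page b i r t = p}
      {s \<in> {..<a + b}. merge_at (r + t) s = p}"
    by (rule bij_betw_Collect[OF bij_betw_slot[OF assms(1)]]) (simp add: edge_page_def)
  then have "card {i. i < a + b \<and> edge_page b i r t = p} =
      card {s. s < a + b \<and> merge_at (r + t) s = p}"
    by (simp add: bij_betw_same_card)
  also have "\<dots> = (if p = r + t then 2 else 1)"
    using assms by (intro card_merge_at_preimage) auto
  finally show ?thesis .
qed

definition spine_pos :: "nat \<Rightarrow> nat + nat \<Rightarrow> nat" where
  "spine_pos b v = (case v of Inl i \<Rightarrow> black_pos b i | Inr j \<Rightarrow> white_pos b (j div b) (j mod b))"

definition page_of :: "nat \<Rightarrow> (nat + nat) set \<Rightarrow> nat" where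
  "page_of b e = edge_page b (THE i. Inl i \<in> e) ((THE j. Inr j \<in> e) div b) ((THE j. Inr j \<in> e) mod b)"

lemma page_of_edge: "page_of b {Inl i, Inr j} = edge_page b i (j div b) (j mod b)"
proof -
  have "(THE i'. Inl i' \<in> {Inl i, Inr j}) = i" "(THE j'. Inr j' \<in> {Inl i, Inr j}) = j"
    by (rule the_equality; auto)+
  then show ?thesis unfolding page_of_def by simp
qed

lemma black_pos_eq_iff: "black_pos b i = black_pos b i' \<longleftrightarrow> i = i'"
  using less_white_pos[of i b] less_white_pos[of i' b]
  by (auto simp: black_pos_def white_pos_eq_iff)

lemma black_pos_neq_white_pos: "t < b \<Longrightarrow> black_pos b i \<noteq> white_pos b r t"
  using less_white_pos[of i b] by (auto simp: black_pos_def white_pos_eq_iff)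

lemma inj_spine_pos:
  assumes "0 < b"
  shows "inj (spine_pos b)"
proof (rule injI)
  fix u v
  assume eq: "spine_pos b u = spine_pos b v"
  have grid_inj: "j = j'" if "j div b = j' div b" "j mod b = j' mod b" for j j' :: nat
    by (metis div_mult_mod_eq that)
  show "u = v"
    using eq assms black_pos_neq_white_pos[of _ b] black_pos_neq_white_pos[of _ b, THEN not_sym]
    by (cases u; cases v)
      (auto simp: spine_pos_def black_pos_eq_iff white_pos_eq_iff intro: grid_inj)
qed

lemma grid_coordinates_less:
  fixes j :: nat
  assumes "j < a * b"
  shows "j div b < a" "j mod b < b"
proof -
  have "0 < b" using assms by (cases b) auto
  then show "j div b < a" "j mod b < b"
    using assms by (simp_all add: div_less_iff_less_mult mult.commute)
qed

lemma book_embedding_complete_bipartite: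
  assumes "0 < b"
  shows "book_embedding (a + b - 1) (KV (a + b) (a * b)) (KE (a + b) (a * b)) (spine_pos b) (page_of b)"
  unfolding book_embedding_def
proof (intro conjI ballI allI impI)
  show "inj_on (spine_pos b) (KV (a + b) (a * b))"
    using inj_spine_pos[OF assms] by (rule inj_on_subset) simp
next
  fix e
  assume "e \<in> KE (a + b) (a * b)"
  then obtain i j where "e = {Inl i, Inr j}" "i < a + b" "j < a * b"
    unfolding KE_def by auto
  then show "page_of b e < a + b - 1"
    using edge_page_less grid_coordinates_less by (simp add: page_of_edge)
next
  fix e f u v x y
  assume "e \<in> KE (a + b) (a * b)" "f \<in> KE (a + b) (a * b)"
    and uv_xy: "e = {u, v} \<and> f = {x, y} \<and> page_of b e = page_of b f"
  then obtain i j i' j' where e: "e = {Inl i, Inr j}" "j < a * b"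
    and f: "f = {Inl i', Inr j'}" "j' < a * b"
    unfolding KE_def by auto
  have "\<not> crossing (spine_pos b (Inl i)) (spine_pos b (Inr j)) (spine_pos b (Inl i')) (spine_pos b (Inr j'))"
    unfolding spine_pos_def using uv_xy e f
    by (simp add: edge_page_noncrossing page_of_edge grid_coordinates_less)
  moreover have "u = Inl i \<and> v = Inr j \<or> u = Inr j \<and> v = Inl i"
    "x = Inl i' \<and> y = Inr j' \<or> x = Inr j' \<and> y = Inl i'"
    using uv_xy e f by (auto simp: doubleton_eq_iff)
  ultimately show "\<not> crossing (spine_pos b u) (spine_pos b v) (spine_pos b x) (spine_pos b y)"
    using crossing_swap_first crossing_swap_second by metis
qed

lemma balanced_embedding_complete_bipartite:
  assumes "0 < b"
  shows "balanced_embedding (a + b - 1) (a * b) (spine_pos b) (page_of b)"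
proof -
  have "card {p. p < a + b - 1 \<and> load (a + b) (page_of b) j p = 1} = a + b - 1 - 1"
    if "j < a * b" for j
  proof -
    have rt: "j div b < a" "j mod b < b"
      using grid_coordinates_less[OF that] .
    have "{p. p < a + b - 1 \<and> load (a + b) (page_of b) j p = 1} = {..<a + b - 1} - {j div b + j mod b}"
      using card_edge_page_preimage[OF rt] by (auto simp: load_def page_of_edge)
    moreover have "j div b + j mod b < a + b - 1"
      using rt by linarith
    ultimately show ?thesis by simp
  qed
  moreover have "a + b - 1 + 1 = a + b"
    using assms by simp
  ultimately show ?thesis
    unfolding balanced_embedding_def
    using book_embedding_complete_bipartite[OF assms] by simp
qed

lemma square_div_four: "(n::nat)\<^sup>2 div 4 = n div 2 * (n - n div 2)"
proof (cases "even n")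
  case True
  then obtain m where "n = 2 * m" by blast
  then show ?thesis by (simp add: power2_eq_square)
next
  case False
  then obtain m where n: "n = 2 * m + 1" by (blast elim: oddE)
  then have "n\<^sup>2 = 4 * (m * (m + 1)) + 1"
    by (simp add: power2_eq_square algebra_simps)
  then show ?thesis using n by simp
qed

theorem proposition19:
  fixes k :: nat
  assumes "k \<ge> 1"
  shows "\<exists>pos page. balanced_embedding k ((k + 1)^2 div 4) pos page"
proof -
  \<comment> \<open>the construction also covers \<open>k = 0\<close>\<close>
  let ?a = "(k + 1) div 2" and ?b = "k + 1 - (k + 1) div 2"
  have "0 < ?b" "?a + ?b - 1 = k" "(k + 1)^2 div 4 = ?a * ?b"
    by (auto simp: square_div_four)
  then show ?thesis
    using balanced_embedding_complete_bipartite[of ?b ?a] by metis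
qed

end
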